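(* Let $T_{a_1\dots a_r}$ be a rank-$r$ tensor. Then $(T\,{}_i\!\times_i T)=0$ for all $i=1,\dots,r$ if and only if either $T=0$ or $T_{a_1\dots a_r}=k^{(1)}_{a_1}k^{(2)}_{a_2}\cdots k^{(r)}_{a_r}$ for some null vectors $k^{(1)},\dots,k^{(r)}$. Consequently, if $(T\,{}_i\!\times_i T)=0$ for all $i$, then $T\in\mathcal{DP}\cup-\mathcal{DP}$.
   Context: Lorentzian metric of signature $(+,-,\dots,-)$ with time orientation; null: $k\ne0$, $k\cdot k=0$; causal: $v\neq0$, $v\cdot v\ge0$. $(T\,{}_i\!\times_i T)$ is $T\otimes T$ with the $i$-th index of the first factor contracted with the $i$-th index of the second, other indices in order. $\mathcal{DP}$: tensors $X$ with $X_{a_1\dots a_r}u_1^{a_1}\cdots u_r^{a_r}\ge0$ for all causal future-pointing $u_j$; $-\mathcal{DP}$ their negatives. *)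

theory Defs
  imports Complex_Main
begin

text \<open>Minkowski space of dimension d with orthonormal basis e_0,...,e_(d-1),
  metric diag(+1,-1,...,-1); the time orientation is given by e_0.
  Vectors/covectors are functions nat => real, only components a < d matter.
  A rank-r tensor is a function on index lists; only lists of length r with
  entries < d matter.\<close>

definition eta :: "nat \<Rightarrow> real" where
  "eta a = (if a = 0 then 1 else -1)"

definition mink :: "nat \<Rightarrow> (nat \<Rightarrow> real) \<Rightarrow> (nat \<Rightarrow> real) \<Rightarrow> real" where
  "mink d v w = (\<Sum>a<d. eta a * v a * w a)"

definition nonzero_vec :: "nat \<Rightarrow> (nat \<Rightarrow> real) \<Rightarrow> bool" where
  "nonzero_vec d v \<longleftrightarrow> (\<exists>a<d. v a \<noteq> 0)"

definition null_vec :: "nat \<Rightarrow> (nat \<Rightarrow> real) \<Rightarrow> bool" where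
  "null_vec d k \<longleftrightarrow> nonzero_vec d k \<and> mink d k k = 0"

definition causal_vec :: "nat \<Rightarrow> (nat \<Rightarrow> real) \<Rightarrow> bool" where
  "causal_vec d v \<longleftrightarrow> nonzero_vec d v \<and> mink d v v \<ge> 0"

definition future_causal :: "nat \<Rightarrow> (nat \<Rightarrow> real) \<Rightarrow> bool" where
  "future_causal d v \<longleftrightarrow> causal_vec d v \<and> v 0 > 0"

definition idx :: "nat \<Rightarrow> nat \<Rightarrow> nat list set" where
  "idx d m = {xs. length xs = m \<and> set xs \<subseteq> {..<d}}"

definition ins_at :: "nat \<Rightarrow> nat \<Rightarrow> nat list \<Rightarrow> nat list" where
  "ins_at i c xs = take i xs @ c # drop i xs"

text \<open>(T _i x_i T) for a rank-r tensor T, i 0-based (i < r): a rank (2r-2) tensor;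
  the first r-1 indices are the free indices of the first factor, the last r-1
  those of the second factor, the contracted indices use the inverse metric.\<close>
definition self_contr ::
  "nat \<Rightarrow> nat \<Rightarrow> nat \<Rightarrow> (nat list \<Rightarrow> real) \<Rightarrow> nat list \<Rightarrow> real" where
  "self_contr d r i T xs =
     (\<Sum>c<d. eta c * T (ins_at i c (take (r - 1) xs)) * T (ins_at i c (drop (r - 1) xs)))"

definition tensor_zero :: "nat \<Rightarrow> nat \<Rightarrow> (nat list \<Rightarrow> real) \<Rightarrow> bool" where
  "tensor_zero d m T \<longleftrightarrow> (\<forall>xs\<in>idx d m. T xs = 0)"

definition is_DP :: "nat \<Rightarrow> nat \<Rightarrow> (nat list \<Rightarrow> real) \<Rightarrow> bool" where
  "is_DP d r X \<longleftrightarrow> (\<forall>u :: nat \<Rightarrow> nat \<Rightarrow> real. (\<forall>j<r. future_causal d (u j)) \<longrightarrow>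
      (\<Sum>xs\<in>idx d r. X xs * (\<Prod>j<r. u j (xs ! j))) \<ge> 0)"

definition is_negDP :: "nat \<Rightarrow> nat \<Rightarrow> (nat list \<Rightarrow> real) \<Rightarrow> bool" where
  "is_negDP d r X \<longleftrightarrow> is_DP d r (\<lambda>xs. - X xs)"

end

theory Submission
  imports Defs "HOL-Analysis.Convex"
begin

text \<open>Vanishing of the i-th self-contraction says that the fibers of T in slot i (the
  covectors obtained by fixing all other indices) are null and pairwise orthogonal.
  Orthogonal null vectors are proportional, so two entries of T may exchange their
  i-th index; moving from a nonzero entry to any other one slot at a time exhibits T as
  the tensor product of its fibers through that entry. For the positivity statement,
  a null covector has a fixed sign on the future cone (reverse Cauchy--Schwarz), so the
  contraction of \<open>k\<^sub>1 \<otimes> \<dots> \<otimes> k\<^sub>r\<close> with future causal vectors has the constant sign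
  of the product of the time components of the \<open>k\<^sub>j\<close>.\<close>

lemma mink_time_space_split:
  assumes "d \<ge> 1"
  shows "mink d v w = v 0 * w 0 - (\<Sum>a\<in>{1..<d}. v a * w a)"
proof -
  have "{..<d} = insert 0 {1..<d}" using assms by auto
  then show ?thesis
    by (simp add: mink_def eta_def sum.If_cases sum_negf flip: sum_subtractf)
qed

lemma mink_self_zero_time_zero:
  assumes "mink d v v = 0" and "v 0 = 0" and "a < d"
  shows "v a = 0"
proof -
  have "(\<Sum>c\<in>{1..<d}. v c * v c) = 0"
    using assms mink_time_space_split[of d v v] by simp
  then have "\<forall>c\<in>{1..<d}. v c * v c = 0"
    by (subst sum_nonneg_eq_0_iff[symmetric]) auto
  then show ?thesis using assms(2,3) by (cases "a = 0") auto
qed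

lemma null_vec_time_nonzero: "null_vec d k \<Longrightarrow> k 0 \<noteq> 0"
  unfolding null_vec_def nonzero_vec_def using mink_self_zero_time_zero by blast

lemma null_orthogonal_minor:
  assumes vv: "mink d v v = 0" and ww: "mink d w w = 0" and vw: "mink d v w = 0"
    and a: "a < d" and b: "b < d"
  shows "v a * w b = v b * w a"
proof -
  have d: "d \<ge> 1" using a by simp
  have spatial: "(\<Sum>c\<in>{1..<d}. v c * v c) = v 0 * v 0" "(\<Sum>c\<in>{1..<d}. w c * w c) = w 0 * w 0"
    "(\<Sum>c\<in>{1..<d}. v c * w c) = v 0 * w 0"
    using vv ww vw mink_time_space_split[OF d] by simp_all
  \<comment> \<open>Lagrange's identity turns the three relations into a vanishing sum of squares.\<close>
  have "(\<Sum>c\<in>{1..<d}. (v 0 * w c - v c * w 0)\<^sup>2)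
      = (v 0)\<^sup>2 * (\<Sum>c\<in>{1..<d}. w c * w c) - 2 * v 0 * w 0 * (\<Sum>c\<in>{1..<d}. v c * w c)
        + (w 0)\<^sup>2 * (\<Sum>c\<in>{1..<d}. v c * v c)"
    by (simp add: power2_eq_square algebra_simps sum.distrib sum_subtractf sum_distrib_left)
  also have "\<dots> = 0"
    unfolding spatial by (simp add: power2_eq_square)
  finally have "\<forall>c\<in>{1..<d}. (v 0 * w c - v c * w 0)\<^sup>2 = 0"
    by (subst sum_nonneg_eq_0_iff[symmetric]) auto
  then have time_minor: "v 0 * w c = v c * w 0" if "c < d" for c
    using that by (cases "c = 0") auto
  show ?thesis
  proof (cases "v 0 = 0")
    case True
    then show ?thesis using mink_self_zero_time_zero[OF vv] a b by simp
  next
    case False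
    have "v 0 * (v a * w b) = v 0 * (v b * w a)"
      using time_minor[OF a] time_minor[OF b] by (metis mult.left_commute)
    then show ?thesis using False by simp
  qed
qed

lemma null_future_inner_sign:
  assumes kk: "mink d k k = 0" and u: "future_causal d u"
  shows "k 0 * (\<Sum>a<d. k a * u a) \<ge> 0"
proof -
  have u0: "u 0 > 0" and uu: "mink d u u \<ge> 0" and d: "d \<ge> 1"
    using u unfolding future_causal_def causal_vec_def nonzero_vec_def by auto
  define S where "S = (\<Sum>a\<in>{1..<d}. k a * u a)"
  have "S\<^sup>2 \<le> (\<Sum>a\<in>{1..<d}. (k a)\<^sup>2) * (\<Sum>a\<in>{1..<d}. (u a)\<^sup>2)"
    unfolding S_def by (rule Cauchy_Schwarz_ineq_sum)
  also have "\<dots> \<le> (k 0)\<^sup>2 * (u 0)\<^sup>2"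
  proof (rule mult_mono)
    show "(\<Sum>a\<in>{1..<d}. (k a)\<^sup>2) \<le> (k 0)\<^sup>2" "(\<Sum>a\<in>{1..<d}. (u a)\<^sup>2) \<le> (u 0)\<^sup>2"
      using kk uu mink_time_space_split[OF d] by (simp_all add: power2_eq_square)
  qed (simp_all add: sum_nonneg)
  also have "\<dots> = (\<bar>k 0\<bar> * u 0)\<^sup>2"
    by (simp add: power_mult_distrib)
  finally have "\<bar>S\<bar> \<le> \<bar>k 0\<bar> * u 0"
    using u0 by (simp add: power2_le_iff_abs_le)
  then have "\<bar>k 0 * S\<bar> \<le> \<bar>k 0\<bar> * (\<bar>k 0\<bar> * u 0)"
    by (simp add: abs_mult mult_left_mono)
  also have "\<dots> = (k 0)\<^sup>2 * u 0"
    by (simp add: power2_eq_square)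
  finally have "\<bar>k 0 * S\<bar> \<le> (k 0)\<^sup>2 * u 0" .
  moreover have "{..<d} = insert 0 {1..<d}"
    using d by auto
  then have "(\<Sum>a<d. k a * u a) = k 0 * u 0 + S"
    unfolding S_def by simp
  ultimately show ?thesis by (simp add: algebra_simps power2_eq_square abs_le_iff)
qed

definition rem_at :: "nat \<Rightarrow> nat list \<Rightarrow> nat list" where
  "rem_at i xs = take i xs @ drop (Suc i) xs"

lemma ins_at_rem_at: "i < length xs \<Longrightarrow> ins_at i c (rem_at i xs) = xs[i := c]"
  unfolding ins_at_def rem_at_def by (simp add: upd_conv_take_nth_drop min_def)

lemma ins_at_eq_update: "i \<le> length p \<Longrightarrow> ins_at i c p = (ins_at i c' p)[i := c]"
  unfolding ins_at_def by (simp add: list_update_append min_def)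

lemma nth_idx_less: "xs \<in> idx d r \<Longrightarrow> j < r \<Longrightarrow> xs ! j < d"
  unfolding idx_def using nth_mem by fastforce

lemma rem_at_in_idx: "xs \<in> idx d r \<Longrightarrow> i < r \<Longrightarrow> rem_at i xs \<in> idx d (r - 1)"
  unfolding idx_def rem_at_def using set_take_subset set_drop_subset by fastforce

lemma ins_at_in_idx: "p \<in> idx d m \<Longrightarrow> c < d \<Longrightarrow> ins_at i c p \<in> idx d (Suc m)"
  unfolding idx_def ins_at_def using set_take_subset set_drop_subset by fastforce

lemma sum_idx_prod_nth:
  fixes f :: "nat \<Rightarrow> nat \<Rightarrow> 'a::comm_semiring_1"
  shows "(\<Sum>xs\<in>idx d r. \<Prod>j<r. f j (xs ! j)) = (\<Prod>j<r. \<Sum>a<d. f j a)"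
proof (induction r arbitrary: f)
  case 0
  have "idx d 0 = {[]}" unfolding idx_def by auto
  then show ?case by simp
next
  case (Suc r)
  have idx_Suc: "idx d (Suc r) = (\<lambda>(xs, a). a # xs) ` (idx d r \<times> {..<d})"
    unfolding idx_def using lists_length_Suc_eq[of "{..<d}" r] by (simp add: conj_commute)
  have inj: "inj_on (\<lambda>(xs, a). a # xs) (idx d r \<times> {..<d})"
    by (auto simp: inj_on_def)
  have "(\<Sum>xs\<in>idx d (Suc r). \<Prod>j<Suc r. f j (xs ! j))
      = (\<Sum>xs\<in>idx d r. \<Sum>a<d. f 0 a * (\<Prod>j<r. f (Suc j) (xs ! j)))"
    unfolding idx_Suc sum.reindex[OF inj]
    by (simp add: sum.cartesian_product prod.lessThan_Suc_shift case_prod_unfold del: prod.lessThan_Suc)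
  also have "\<dots> = (\<Sum>a<d. f 0 a) * (\<Sum>xs\<in>idx d r. \<Prod>j<r. f (Suc j) (xs ! j))"
    unfolding sum_product by (rule sum.swap)
  also have "\<dots> = (\<Sum>a<d. f 0 a) * (\<Prod>j<r. \<Sum>a<d. f (Suc j) a)"
    using Suc.IH[of "\<lambda>j. f (Suc j)"] by simp
  also have "\<dots> = (\<Prod>j<Suc r. \<Sum>a<d. f j a)"
    by (simp add: prod.lessThan_Suc_shift del: prod.lessThan_Suc)
  finally show ?case .
qed

definition fiber :: "(nat list \<Rightarrow> real) \<Rightarrow> nat \<Rightarrow> nat list \<Rightarrow> nat \<Rightarrow> real" where
  "fiber T i p c = T (ins_at i c p)"

lemma self_contr_append:
  "length p = r - 1 \<Longrightarrow> self_contr d r i T (p @ q) = mink d (fiber T i p) (fiber T i q)"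
  unfolding self_contr_def mink_def fiber_def by (simp add: mult.assoc)

lemma tensor_zero_self_contr_iff:
  "tensor_zero d (2 * r - 2) (self_contr d r i T) \<longleftrightarrow>
     (\<forall>p\<in>idx d (r - 1). \<forall>q\<in>idx d (r - 1). mink d (fiber T i p) (fiber T i q) = 0)"
proof -
  have idx_split: "idx d (2 * r - 2) = {p @ q |p q. p \<in> idx d (r - 1) \<and> q \<in> idx d (r - 1)}"
  proof (intro set_eqI iffI)
    fix xs assume "xs \<in> idx d (2 * r - 2)"
    then have "take (r - 1) xs \<in> idx d (r - 1)" "drop (r - 1) xs \<in> idx d (r - 1)"
      unfolding idx_def using set_take_subset set_drop_subset by fastforce+
    then show "xs \<in> {p @ q |p q. p \<in> idx d (r - 1) \<and> q \<in> idx d (r - 1)}"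
      by (metis (mono_tags, lifting) append_take_drop_id mem_Collect_eq)
  qed (auto simp: idx_def)
  have "tensor_zero d (2 * r - 2) (self_contr d r i T) \<longleftrightarrow>
     (\<forall>p\<in>idx d (r - 1). \<forall>q\<in>idx d (r - 1). self_contr d r i T (p @ q) = 0)"
    unfolding tensor_zero_def idx_split by blast
  then show ?thesis
    by (simp add: self_contr_append idx_def)
qed

lemma self_contr_zero_exchange:
  assumes H: "tensor_zero d (2 * r - 2) (self_contr d r i T)"
    and x: "x \<in> idx d r" and y: "y \<in> idx d r" and i: "i < r" and a: "a < d" and b: "b < d"
  shows "T (x[i := a]) * T (y[i := b]) = T (x[i := b]) * T (y[i := a])"
proof -
  have "fiber T i (rem_at i xs) c = T (xs[i := c])" if "xs \<in> idx d r" for xs c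
    using that i unfolding fiber_def idx_def by (simp add: ins_at_rem_at)
  moreover have "fiber T i (rem_at i x) a * fiber T i (rem_at i y) b
               = fiber T i (rem_at i x) b * fiber T i (rem_at i y) a"
    using H rem_at_in_idx[OF x i] rem_at_in_idx[OF y i] a b
    unfolding tensor_zero_self_contr_iff by (blast intro: null_orthogonal_minor)
  ultimately show ?thesis using x y by simp
qed

lemma exchange_product_formula:
  fixes T :: "nat list \<Rightarrow> 'a::comm_semiring_1"
  assumes exchange: "\<And>i x y a b. i < r \<Longrightarrow> x \<in> idx d r \<Longrightarrow> y \<in> idx d r \<Longrightarrow> a < d \<Longrightarrow> b < d \<Longrightarrow>
      T (x[i := a]) * T (y[i := b]) = T (x[i := b]) * T (y[i := a])"
    and x0: "x0 \<in> idx d r" and x: "x \<in> idx d r"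
  shows "T x * T x0 ^ r = T x0 * (\<Prod>j<r. T (x0[j := x ! j]))"
proof -
  define z where "z m = take m x @ drop m x0" for m
  have len: "length x = r" "length x0 = r"
    using x x0 unfolding idx_def by auto
  have z_idx: "z m \<in> idx d r" for m
    using x x0 set_take_subset set_drop_subset unfolding z_def idx_def by fastforce
  have z_Suc: "z (Suc m) = (z m)[m := x ! m]" and z_fix: "(z m)[m := x0 ! m] = z m"
    if "m < r" for m
    using that len unfolding z_def
    by (auto simp: list_update_append take_Suc_conv_app_nth upd_conv_take_nth_drop Cons_nth_drop_Suc)
  have "T (z m) * T x0 ^ m = T x0 * (\<Prod>j<m. T (x0[j := x ! j]))" if "m \<le> r" for m
    using that
  proof (induction m)
    case 0
    then show ?case by (simp add: z_def)
  next
    case (Suc m)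
    then have m: "m < r" by simp
    have step: "T (z (Suc m)) * T x0 = T (z m) * T (x0[m := x ! m])"
      using exchange[OF m z_idx x0 nth_idx_less[OF x m] nth_idx_less[OF x0 m]]
      by (simp add: z_Suc[OF m] z_fix[OF m])
    have "T (z (Suc m)) * T x0 ^ Suc m = (T (z m) * T x0 ^ m) * T (x0[m := x ! m])"
      using step by (metis mult.assoc mult.commute power_Suc)
    also have "\<dots> = T x0 * (\<Prod>j<Suc m. T (x0[j := x ! j]))"
      using Suc.IH m by (simp add: ac_simps)
    finally show ?case .
  qed
  moreover have "z r = x"
    using len unfolding z_def by simp
  ultimately show ?thesis by force
qed

definition null_product_tensor :: "nat \<Rightarrow> nat \<Rightarrow> (nat list \<Rightarrow> real) \<Rightarrow> bool" where
  "null_product_tensor d r T \<longleftrightarrow>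
     (\<exists>k :: nat \<Rightarrow> nat \<Rightarrow> real. (\<forall>j<r. null_vec d (k j)) \<and>
        (\<forall>xs\<in>idx d r. T xs = (\<Prod>j<r. k j (xs ! j))))"

lemma mink_scale: "mink d (\<lambda>a. s * v a) (\<lambda>a. t * w a) = s * t * mink d v w"
  unfolding mink_def by (simp add: sum_distrib_left ac_simps)

lemma self_contr_zero_imp_null_product:
  assumes H: "\<forall>i<r. tensor_zero d (2 * r - 2) (self_contr d r i T)"
    and "r \<ge> 1" and "\<not> tensor_zero d r T"
  shows "null_product_tensor d r T"
proof -
  obtain x0 where x0: "x0 \<in> idx d r" and t0: "T x0 \<noteq> 0"
    using assms(3) unfolding tensor_zero_def by blast
  obtain r' where r: "r = Suc r'"
    using assms(2) by (cases r) auto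
  \<comment> \<open>Dividing all but the first fiber by \<open>T x0\<close> absorbs the factor \<open>T x0 ^ (r - 1)\<close>
    of the product formula.\<close>
  define k where "k j c = T (x0[j := c]) / (if j = 0 then 1 else T x0)" for j c
  have "null_vec d (k j)" if j: "j < r" for j
  proof -
    define s where "s = 1 / (if j = 0 then 1 else T x0)"
    have k_fiber: "k j = (\<lambda>c. s * fiber T j (rem_at j x0) c)"
      using x0 j unfolding k_def s_def fiber_def idx_def by (auto simp: ins_at_rem_at)
    have "mink d (k j) (k j) = 0"
      using H j rem_at_in_idx[OF x0 j]
      unfolding k_fiber mink_scale tensor_zero_self_contr_iff by simp
    moreover have "k j (x0 ! j) \<noteq> 0"
      using t0 unfolding k_def by simp
    ultimately show ?thesis
      using nth_idx_less[OF x0 j] unfolding null_vec_def nonzero_vec_def by blast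
  qed
  moreover have "T x = (\<Prod>j<r. k j (x ! j))" if x: "x \<in> idx d r" for x
  proof -
    have "T x * T x0 ^ r = T x0 * (\<Prod>j<r. T (x0[j := x ! j]))"
      by (rule exchange_product_formula[OF _ x0 x]) (use H self_contr_zero_exchange in blast)
    then have factors: "(\<Prod>j<r. T (x0[j := x ! j])) = T x * T x0 ^ r'"
      using t0 r by (simp add: ac_simps)
    have "(\<Prod>j<r. k j (x ! j)) = (\<Prod>j<r. T (x0[j := x ! j])) / T x0 ^ r'"
      unfolding k_def r by (simp add: prod.lessThan_Suc_shift prod_dividef del: prod.lessThan_Suc)
    also have "\<dots> = T x"
      using t0 unfolding factors by simp
    finally show ?thesis ..
  qed
  ultimately show ?thesis
    unfolding null_product_tensor_def by blast
qed

lemma fiber_product_tensor: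
  assumes T: "\<forall>xs\<in>idx d r. T xs = (\<Prod>j<r. k j (xs ! j))"
    and p: "p \<in> idx d (r - 1)" and i: "i < r" and c: "c < d"
  shows "fiber T i p c = k i c * (\<Prod>j\<in>{..<r} - {i}. k j (ins_at i 0 p ! j))"
proof -
  have len: "i \<le> length p" "length (ins_at i 0 p) = r"
    using p i unfolding idx_def ins_at_def by auto
  have "ins_at i c p \<in> idx d r"
    using ins_at_in_idx[OF p c] i by simp
  then have "fiber T i p c = (\<Prod>j<r. k j ((ins_at i 0 p)[i := c] ! j))"
    using T unfolding fiber_def ins_at_eq_update[OF len(1), of c 0] by simp
  also have "\<dots> = k i c * (\<Prod>j\<in>{..<r} - {i}. k j (ins_at i 0 p ! j))"
    using i len(2) by (simp add: prod.remove[of "{..<r}" i])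
  finally show ?thesis .
qed

lemma null_product_imp_self_contr_zero:
  assumes "null_product_tensor d r T" and i: "i < r"
  shows "tensor_zero d (2 * r - 2) (self_contr d r i T)"
proof -
  obtain k where null: "\<forall>j<r. null_vec d (k j)"
    and T: "\<forall>xs\<in>idx d r. T xs = (\<Prod>j<r. k j (xs ! j))"
    using assms(1) unfolding null_product_tensor_def by blast
  have "mink d (fiber T i p) (fiber T i q) = 0"
    if p: "p \<in> idx d (r - 1)" and q: "q \<in> idx d (r - 1)" for p q
  proof -
    define P where "P = (\<Prod>j\<in>{..<r} - {i}. k j (ins_at i 0 p ! j))"
    define Q where "Q = (\<Prod>j\<in>{..<r} - {i}. k j (ins_at i 0 q ! j))"
    have "mink d (fiber T i p) (fiber T i q) = mink d (\<lambda>c. P * k i c) (\<lambda>c. Q * k i c)"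
      unfolding mink_def P_def Q_def
      by (intro sum.cong) (simp_all add: fiber_product_tensor[OF T p i] fiber_product_tensor[OF T q i])
    also have "\<dots> = 0"
      using null i unfolding mink_scale null_vec_def by simp
    finally show ?thesis .
  qed
  then show ?thesis
    unfolding tensor_zero_self_contr_iff by blast
qed

lemma tensor_zero_imp_self_contr_zero:
  assumes "tensor_zero d r T" and i: "i < r"
  shows "tensor_zero d (2 * r - 2) (self_contr d r i T)"
proof -
  have "fiber T i p c = 0" if "p \<in> idx d (r - 1)" and "c < d" for p c
    using assms ins_at_in_idx[OF that] unfolding tensor_zero_def fiber_def by simp
  then show ?thesis
    unfolding tensor_zero_self_contr_iff mink_def by simp
qed

lemma tensor_zero_is_DP: "tensor_zero d r T \<Longrightarrow> is_DP d r T"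
  unfolding is_DP_def tensor_zero_def by simp

lemma null_product_DP_or_negDP:
  assumes "null_product_tensor d r T"
  shows "is_DP d r T \<or> is_negDP d r T"
proof -
  obtain k where null: "\<forall>j<r. null_vec d (k j)"
    and T: "\<forall>xs\<in>idx d r. T xs = (\<Prod>j<r. k j (xs ! j))"
    using assms unfolding null_product_tensor_def by blast
  define \<sigma> where "\<sigma> = (\<Prod>j<r. sgn (k j 0))"
  have "\<sigma> * (\<Sum>xs\<in>idx d r. T xs * (\<Prod>j<r. u j (xs ! j))) \<ge> 0"
    if u: "\<forall>j<r. future_causal d (u j)" for u
  proof -
    have "(\<Sum>xs\<in>idx d r. T xs * (\<Prod>j<r. u j (xs ! j)))
        = (\<Sum>xs\<in>idx d r. \<Prod>j<r. k j (xs ! j) * u j (xs ! j))"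
      using T by (intro sum.cong) (simp_all add: prod.distrib)
    also have "\<dots> = (\<Prod>j<r. \<Sum>a<d. k j a * u j a)"
      by (rule sum_idx_prod_nth)
    finally have "\<sigma> * (\<Sum>xs\<in>idx d r. T xs * (\<Prod>j<r. u j (xs ! j)))
        = (\<Prod>j<r. sgn (k j 0) * (\<Sum>a<d. k j a * u j a))"
      unfolding \<sigma>_def by (simp add: prod.distrib)
    also have "\<dots> \<ge> 0"
    proof (intro prod_nonneg ballI)
      fix j assume "j \<in> {..<r}"
      then have "k j 0 * (\<Sum>a<d. k j a * u j a) \<ge> 0"
        using null u null_future_inner_sign unfolding null_vec_def by simp
      then show "sgn (k j 0) * (\<Sum>a<d. k j a * u j a) \<ge> 0"
        by (cases "k j 0" "0::real" rule: linorder_cases) (auto simp: zero_le_mult_iff)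
    qed
    finally show ?thesis .
  qed
  moreover have "\<sigma> = 1 \<or> \<sigma> = -1"
    using null null_vec_time_nonzero unfolding \<sigma>_def
    by (induction r) (auto simp: sgn_if)
  ultimately show ?thesis
    unfolding is_negDP_def is_DP_def by (auto simp: sum_negf)
qed

theorem mainTheorem15:
  fixes d r :: nat and T :: "nat list \<Rightarrow> real"
  assumes "d \<ge> 2" and "r \<ge> 1"
  shows "((\<forall>i<r. tensor_zero d (2 * r - 2) (self_contr d r i T)) \<longleftrightarrow>
           (tensor_zero d r T \<or>
            (\<exists>k :: nat \<Rightarrow> nat \<Rightarrow> real. (\<forall>j<r. null_vec d (k j)) \<and>
                 (\<forall>xs\<in>idx d r. T xs = (\<Prod>j<r. k j (xs ! j))))))
       \<and> ((\<forall>i<r. tensor_zero d (2 * r - 2) (self_contr d r i T)) \<longrightarrow>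
           is_DP d r T \<or> is_negDP d r T)"
proof -
  have "(\<forall>i<r. tensor_zero d (2 * r - 2) (self_contr d r i T)) \<longleftrightarrow>
          tensor_zero d r T \<or> null_product_tensor d r T"
    using self_contr_zero_imp_null_product[OF _ assms(2)] null_product_imp_self_contr_zero
      tensor_zero_imp_self_contr_zero by blast
  moreover have "tensor_zero d r T \<or> null_product_tensor d r T \<Longrightarrow> is_DP d r T \<or> is_negDP d r T"
    using tensor_zero_is_DP null_product_DP_or_negDP by blast
  ultimately show ?thesis
    unfolding null_product_tensor_def by blast
qed

end
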